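(* Let $\Omega\subsetneq\mathbb{C}$ be a simply connected domain and $Y\subsetneq\mathbb{C}$ an arbitrary domain. Then for every $s\in Y$ and every $w\in\Omega$, $\mathscr{C}_{\Omega}^{Y,s}(w)=\eta_\Omega(w)$.
   Context: $\mathbb{D}=\{z\in\mathbb{C}:|z|<1\}$. For domains $\Omega\subset\mathbb{C}$, $Y\subsetneq\mathbb{C}$, and points $w\in\Omega$, $s\in Y$, let $\mathcal{H}^s_w(\Omega,Y)$ be the set of holomorphic maps $h:\Omega\to Y$ with $h(w)=s$ and $h(z)\neq s$ for all $z\in\Omega\setminus\{w\}$. For a domain $Y\subsetneq\mathbb{C}$ and $v\in Y$, the Hurwitz density is $\eta_Y(v)=2/r_Y(v)$, where $r_Y(v)=\max\{h'(0): h:\mathbb{D}\to Y \text{ holomorphic},\ h(0)=v,\ h(z)\neq v \text{ for } z\in\mathbb{D}\setminus\{0\},\ h'(0)>0\}$. The Carathéodory density of the Hurwitz metric of $\Omega$ relative to $Y$ is $\mathscr{C}_{\Omega}^{Y,s}(w)=\sup\{\eta_Y(h(w))|h'(w)| : h\in\mathcal{H}^s_w(\Omega,Y)\}$ (defined to be $0$ if the family is empty). *)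

theory Defs
  imports "HOL-Complex_Analysis.Complex_Analysis"
begin

definition hurwitz_family :: "complex set \<Rightarrow> complex set \<Rightarrow> complex \<Rightarrow> complex \<Rightarrow> (complex \<Rightarrow> complex) set" where
  "hurwitz_family \<Omega> Y w s =
     {h. h holomorphic_on \<Omega> \<and> h ` \<Omega> \<subseteq> Y \<and> h w = s \<and> (\<forall>z\<in>\<Omega> - {w}. h z \<noteq> s)}"

text \<open>r_Y(v): the extremal value of h'(0) over h in H^v_0(D, Y) with h'(0) > 0
  (the paper's max; rendered as the supremum).\<close>
definition hurwitz_radius :: "complex set \<Rightarrow> complex \<Rightarrow> real" where
  "hurwitz_radius Y v =
     Sup {x::real. x > 0 \<and> (\<exists>h \<in> hurwitz_family (ball 0 1) Y 0 v. deriv h 0 = complex_of_real x)}"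

definition hurwitz_density :: "complex set \<Rightarrow> complex \<Rightarrow> real" where
  "hurwitz_density Y v = 2 / hurwitz_radius Y v"

definition caratheodory_hurwitz :: "complex set \<Rightarrow> complex set \<Rightarrow> complex \<Rightarrow> complex \<Rightarrow> real" where
  "caratheodory_hurwitz \<Omega> Y s w =
     (if hurwitz_family \<Omega> Y w s = {} then 0
      else Sup ((\<lambda>h. hurwitz_density Y (h w) * cmod (deriv h w)) ` hurwitz_family \<Omega> Y w s))"

end

theory Submission
  imports Defs
begin

text \<open>Precomposition with a Riemann map \<open>F : \<Omega> \<rightarrow> \<bbbD>\<close> with \<open>F w = 0\<close> is a
  bijection from \<open>H\<^sup>s\<^sub>0(\<bbbD>, Y)\<close> onto \<open>H\<^sup>s\<^sub>w(\<Omega>, Y)\<close> that multiplies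
  derivatives at the centre by \<open>F'(w)\<close>. Hence the Caratheodory density is
  \<open>\<eta>\<^sub>Y(s) \<cdot> r\<^sub>Y(s) \<cdot> |F'(w)| = 2 |F'(w)|\<close>, while Schwarz's lemma gives
  \<open>r\<^sub>\<Omega>(w) = 1 / |F'(w)|\<close>. That \<open>r\<^sub>Y(s)\<close> is positive and finite follows from a
  disc around \<open>s\<close> in \<open>Y\<close> and from Landau's theorem applied to a square root of
  \<open>(p - k)/(p - s)\<close> with \<open>p \<notin> Y\<close>, which omits \<open>0\<close> and \<open>-1\<close> because \<open>k\<close>
  attains \<open>s\<close> only at \<open>0\<close>.\<close>

lemma cSUP_mult_left_nonneg:
  fixes f :: "'a \<Rightarrow> real"
  assumes "0 \<le> c" "A \<noteq> {}" "bdd_above (f ` A)"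
  shows "(SUP x\<in>A. c * f x) = c * (SUP x\<in>A. f x)"
proof -
  have "c * Sup (f ` A) = (SUP y\<in>f ` A. c * y)"
    by (rule continuous_at_Sup_mono)
       (use assms in \<open>auto simp: mono_def mult_left_mono intro!: continuous_intros\<close>)
  then show ?thesis
    by (simp add: image_comp)
qed

lemma hurwitz_family_compose:
  assumes h: "h \<in> hurwitz_family A Y a s"
    and \<phi>: "\<phi> holomorphic_on B" "\<phi> ` B \<subseteq> A" "\<phi> b = a"
    and \<phi>_eq: "\<And>z. z \<in> B \<Longrightarrow> \<phi> z = a \<Longrightarrow> z = b"
  shows "h \<circ> \<phi> \<in> hurwitz_family B Y b s"
proof -
  have "h holomorphic_on A" "h ` A \<subseteq> Y" "h a = s" "\<And>z. z \<in> A - {a} \<Longrightarrow> h z \<noteq> s"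
    using h by (auto simp: hurwitz_family_def)
  moreover have "h \<circ> \<phi> holomorphic_on B"
    using holomorphic_on_compose_gen[OF \<phi>(1) _ \<phi>(2)] h by (simp add: hurwitz_family_def)
  ultimately show ?thesis
    using \<phi> \<phi>_eq by (fastforce simp: hurwitz_family_def)
qed

lemma hurwitz_family_rotate:
  assumes k: "k \<in> hurwitz_family (ball 0 1) Y 0 v" and "deriv k 0 \<noteq> 0"
  obtains h where "h \<in> hurwitz_family (ball 0 1) Y 0 v" "deriv h 0 = of_real (cmod (deriv k 0))"
proof
  define u where "u = cnj (deriv k 0) / cmod (deriv k 0)"
  have "cmod u = 1"
    using \<open>deriv k 0 \<noteq> 0\<close> by (simp add: u_def norm_divide)
  then show "k \<circ> (\<lambda>z. u * z) \<in> hurwitz_family (ball 0 1) Y 0 v"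
    by (intro hurwitz_family_compose[OF k]) (auto simp: norm_mult intro!: holomorphic_intros)
  have "k field_differentiable at 0"
    using k by (auto simp: hurwitz_family_def intro: holomorphic_on_imp_differentiable_at)
  then have "deriv (k \<circ> (\<lambda>z. u * z)) 0 = deriv k 0 * u"
    by (subst deriv_chain) (auto simp: deriv_linear)
  also have "\<dots> = of_real (cmod (deriv k 0))"
    using \<open>deriv k 0 \<noteq> 0\<close>
    by (simp add: u_def complex_norm_square[symmetric] power2_eq_square field_simps)
  finally show "deriv (k \<circ> (\<lambda>z. u * z)) 0 = of_real (cmod (deriv k 0))" .
qed

lemma hurwitz_family_affine:
  assumes "0 < \<epsilon>" "ball s \<epsilon> \<subseteq> Y"
  shows "(\<lambda>z. s + of_real \<epsilon> * z) \<in> hurwitz_family (ball 0 1) Y 0 s"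
proof -
  have "s + of_real \<epsilon> * z \<in> Y" if "z \<in> ball 0 1" for z
    using that assms by (intro subsetD[OF assms(2)]) (simp add: dist_norm norm_mult)
  then show ?thesis
    using assms(1) by (auto simp: hurwitz_family_def intro!: holomorphic_intros)
qed

lemma hurwitz_radius_eq_SUP:
  assumes bdd: "bdd_above ((\<lambda>k. cmod (deriv k 0)) ` hurwitz_family (ball 0 1) Y 0 v)"
    and k0: "k0 \<in> hurwitz_family (ball 0 1) Y 0 v" "deriv k0 0 \<noteq> 0"
  shows "hurwitz_radius Y v = (SUP k\<in>hurwitz_family (ball 0 1) Y 0 v. cmod (deriv k 0))"
proof -
  define P where
    "P = {x::real. x > 0 \<and> (\<exists>h\<in>hurwitz_family (ball 0 1) Y 0 v. deriv h 0 = of_real x)}"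
  let ?N = "(\<lambda>k. cmod (deriv k 0)) ` hurwitz_family (ball 0 1) Y 0 v"
  have in_P: "cmod (deriv k 0) \<in> P" if "k \<in> hurwitz_family (ball 0 1) Y 0 v" "deriv k 0 \<noteq> 0" for k
    using hurwitz_family_rotate[OF that] that(2) unfolding P_def by force
  have "P \<subseteq> ?N"
    by (force simp: P_def)
  then have bdd_P: "bdd_above P"
    by (rule bdd_above_mono[OF bdd])
  have "0 < Sup P"
    using cSup_upper[OF in_P[OF k0] bdd_P] k0(2) zero_less_norm_iff[of "deriv k0 0"] by linarith
  have "Sup ?N \<le> Sup P"
  proof (rule cSup_least)
    fix y assume "y \<in> ?N"
    then obtain k where "k \<in> hurwitz_family (ball 0 1) Y 0 v" "y = cmod (deriv k 0)" by blast
    then show "y \<le> Sup P"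
      using in_P cSup_upper[OF _ bdd_P] \<open>0 < Sup P\<close> by (cases "deriv k 0 = 0") auto
  qed (use k0 in blast)
  moreover have "Sup P \<le> Sup ?N"
    using cSup_subset_mono[OF _ bdd \<open>P \<subseteq> ?N\<close>] in_P[OF k0] by blast
  ultimately show ?thesis
    by (simp add: hurwitz_radius_def P_def)
qed

lemma Landau_unit_disc:
  obtains L :: "complex \<Rightarrow> real" where
    "\<And>f. f holomorphic_on ball 0 1 \<Longrightarrow> (\<And>z. z \<in> ball 0 1 \<Longrightarrow> f z \<noteq> 0 \<and> f z \<noteq> 1) \<Longrightarrow>
       cmod (deriv f 0) \<le> L (f 0)"
proof -
  obtain R where R_pos: "\<And>z. 0 < R z"
    and R: "\<And>f. \<lbrakk>f holomorphic_on cball 0 (R (f 0));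
                 \<And>z. norm z \<le> R (f 0) \<Longrightarrow> f z \<noteq> 0 \<and> f z \<noteq> 1\<rbrakk> \<Longrightarrow> norm (deriv f 0) < 1"
    using Landau_Picard by metis
  show ?thesis
  proof (rule that[of "\<lambda>a. 2 * R a"])
    fix f assume holf: "f holomorphic_on ball 0 1"
      and omits: "\<And>z. z \<in> ball 0 1 \<Longrightarrow> f z \<noteq> 0 \<and> f z \<noteq> 1"
    define r where "r = 2 * R (f 0)"
    define g where "g = f \<circ> (\<lambda>z. z / of_real r)"
    have "r > 0"
      using R_pos by (simp add: r_def)
    have in_disc: "z / of_real r \<in> ball 0 1" if "cmod z \<le> R (f 0)" for z
      using that \<open>r > 0\<close> R_pos[of "f 0"] by (simp add: r_def norm_divide divide_simps)
    have "g 0 = f 0"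
      by (simp add: g_def)
    have "g holomorphic_on cball 0 (R (g 0))"
      unfolding g_def \<open>g 0 = f 0\<close>
      by (rule holomorphic_on_compose_gen[OF _ holf]) (auto intro!: holomorphic_intros in_disc)
    then have "cmod (deriv g 0) < 1"
      by (rule R) (use omits in_disc in \<open>auto simp: g_def\<close>)
    have "f field_differentiable at 0"
      using holf by (auto intro: holomorphic_on_imp_differentiable_at)
    moreover have "deriv (\<lambda>z. z / of_real r) 0 = 1 / of_real r"
      using \<open>r > 0\<close> by (intro DERIV_imp_deriv) (auto intro!: derivative_eq_intros)
    ultimately have "deriv g 0 = deriv f 0 / of_real r"
      unfolding g_def using \<open>r > 0\<close>
      by (subst deriv_chain) (auto intro!: derivative_intros simp: power2_eq_square)
    with \<open>cmod (deriv g 0) < 1\<close> show "cmod (deriv f 0) \<le> 2 * R (f 0)"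
      using \<open>r > 0\<close> by (simp add: norm_divide r_def)
  qed
qed

lemma holomorphic_sqrt_normalised:
  assumes "g holomorphic_on S" "contractible S" "\<And>z. z \<in> S \<Longrightarrow> g z \<noteq> 0" "a \<in> S" "g a = 1"
  obtains q where "q holomorphic_on S" "q a = 1" "\<And>z. z \<in> S \<Longrightarrow> q z ^ 2 = g z"
proof -
  obtain q0 where holq0: "q0 holomorphic_on S" and q0: "\<And>z. z \<in> S \<Longrightarrow> g z = q0 z ^ 2"
    using contractible_imp_holomorphic_sqrt[OF assms(1-3)] by blast
  have "q0 a ^ 2 = 1"
    using q0[OF assms(4)] assms(5) by simp
  show ?thesis
  proof (rule that[of "\<lambda>z. q0 a * q0 z"])
    show "(\<lambda>z. q0 a * q0 z) holomorphic_on S"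
      by (intro holomorphic_intros holq0)
    show "q0 a * q0 a = 1"
      using \<open>q0 a ^ 2 = 1\<close> by (simp add: power2_eq_square)
    show "(q0 a * q0 z) ^ 2 = g z" if "z \<in> S" for z
      using q0[OF that] \<open>q0 a ^ 2 = 1\<close> by (simp add: power_mult_distrib)
  qed
qed

lemma hurwitz_family_sqrt:
  assumes k: "k \<in> hurwitz_family (ball 0 1) Y 0 s" and "p \<notin> Y"
  obtains q where "q holomorphic_on ball 0 1" "q 0 = 1"
    "\<And>z. z \<in> ball 0 1 \<Longrightarrow> q z \<noteq> 0 \<and> q z \<noteq> -1"
    "deriv k 0 = - 2 * (p - s) * deriv q 0"
proof -
  have holk: "k holomorphic_on ball 0 1" and k_in: "\<And>z. z \<in> ball 0 1 \<Longrightarrow> k z \<in> Y"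
    and "k 0 = s" and k_eq_s: "\<And>z. z \<in> ball 0 1 \<Longrightarrow> k z = s \<Longrightarrow> z = 0"
    using k by (auto simp: hurwitz_family_def)
  have "p \<noteq> s"
    using k_in[of 0] \<open>k 0 = s\<close> \<open>p \<notin> Y\<close> by auto
  define g where "g = (\<lambda>z. (p - k z) / (p - s))"
  have holg: "g holomorphic_on ball 0 1"
    unfolding g_def using \<open>p \<noteq> s\<close> by (intro holomorphic_intros holk) auto
  have g_nz: "g z \<noteq> 0" if "z \<in> ball 0 1" for z
    using k_in[OF that] \<open>p \<notin> Y\<close> \<open>p \<noteq> s\<close> by (auto simp: g_def)
  have "g 0 = 1"
    using \<open>k 0 = s\<close> \<open>p \<noteq> s\<close> by (simp add: g_def)
  then obtain q where holq: "q holomorphic_on ball 0 1" and "q 0 = 1"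
    and q_sq: "\<And>z. z \<in> ball 0 1 \<Longrightarrow> q z ^ 2 = g z"
    using holomorphic_sqrt_normalised[OF holg convex_imp_contractible[OF convex_ball] g_nz, of 0]
    by auto
  have "q z \<noteq> 0 \<and> q z \<noteq> -1" if "z \<in> ball 0 1" for z
  proof
    show "q z \<noteq> 0"
      using q_sq[OF that] g_nz[OF that] by auto
    show "q z \<noteq> -1"
    proof
      assume "q z = -1"
      then have "k z = s"
        using q_sq[OF that] \<open>p \<noteq> s\<close> by (simp add: g_def field_simps)
      then show False
        using k_eq_s[OF that] \<open>q z = -1\<close> \<open>q 0 = 1\<close> by auto
    qed
  qed
  moreover have "deriv k 0 = - 2 * (p - s) * deriv q 0"
  proof -
    have "deriv g 0 = deriv (\<lambda>z. q z ^ 2) 0"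
      using eventually_nhds_in_open[of "ball 0 1" 0] q_sq
      by (intro deriv_cong_ev) (auto elim!: eventually_mono)
    moreover have "(g has_field_derivative - deriv k 0 / (p - s)) (at 0)"
      unfolding g_def using \<open>p \<noteq> s\<close>
      by (auto intro!: derivative_eq_intros holomorphic_derivI[OF holk])
    moreover have "((\<lambda>z. q z ^ 2) has_field_derivative 2 * q 0 * deriv q 0) (at 0)"
      by (auto intro!: derivative_eq_intros holomorphic_derivI[OF holq])
    ultimately have "- deriv k 0 / (p - s) = 2 * deriv q 0"
      using \<open>q 0 = 1\<close> by (simp add: DERIV_imp_deriv)
    then show ?thesis
      using \<open>p \<noteq> s\<close> by (simp add: field_simps)
  qed
  ultimately show ?thesis
    using that holq \<open>q 0 = 1\<close> by blast
qed

lemma bdd_above_hurwitz_derivs: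
  assumes "Y \<noteq> UNIV"
  shows "bdd_above ((\<lambda>k. cmod (deriv k 0)) ` hurwitz_family (ball 0 1) Y 0 s)"
proof -
  obtain p where "p \<notin> Y"
    using assms by blast
  obtain L where L: "\<And>f. f holomorphic_on ball 0 1 \<Longrightarrow>
      (\<And>z. z \<in> ball 0 1 \<Longrightarrow> f z \<noteq> 0 \<and> f z \<noteq> 1) \<Longrightarrow> cmod (deriv f 0) \<le> L (f 0)"
    using Landau_unit_disc by blast
  have "cmod (deriv k 0) \<le> 2 * cmod (p - s) * L (-1)"
    if k: "k \<in> hurwitz_family (ball 0 1) Y 0 s" for k
  proof -
    obtain q where holq: "q holomorphic_on ball 0 1" and "q 0 = 1"
      and omits: "\<And>z. z \<in> ball 0 1 \<Longrightarrow> q z \<noteq> 0 \<and> q z \<noteq> -1"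
      and dk: "deriv k 0 = - 2 * (p - s) * deriv q 0"
      using hurwitz_family_sqrt[OF k \<open>p \<notin> Y\<close>] by blast
    have "cmod (deriv (\<lambda>z. - q z) 0) \<le> L (- q 0)"
    proof (rule L)
      show "(\<lambda>z. - q z) holomorphic_on ball 0 1"
        by (intro holomorphic_intros holq)
      show "- q z \<noteq> 0 \<and> - q z \<noteq> 1" if "z \<in> ball 0 1" for z
        using omits[OF that] by (metis minus_equation_iff neg_equal_0_iff_equal)
    qed
    moreover have "deriv (\<lambda>z. - q z) 0 = - deriv q 0"
      by (intro DERIV_imp_deriv) (auto intro!: derivative_eq_intros holomorphic_derivI[OF holq])
    ultimately have "cmod (deriv q 0) \<le> L (-1)"
      using \<open>q 0 = 1\<close> by simp
    have "cmod (deriv k 0) = 2 * cmod (p - s) * cmod (deriv q 0)"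
      unfolding dk norm_mult by simp
    also have "\<dots> \<le> 2 * cmod (p - s) * L (-1)"
      using \<open>cmod (deriv q 0) \<le> L (-1)\<close> by (intro mult_left_mono) auto
    finally show ?thesis .
  qed
  then show ?thesis
    by (rule bdd_aboveI2)
qed

lemma hurwitz_radius_proper_domain:
  assumes "open Y" "Y \<noteq> UNIV" "s \<in> Y"
  shows "hurwitz_family (ball 0 1) Y 0 s \<noteq> {}" and "0 < hurwitz_radius Y s"
    and "hurwitz_radius Y s = (SUP k\<in>hurwitz_family (ball 0 1) Y 0 s. cmod (deriv k 0))"
proof -
  obtain \<epsilon> where "\<epsilon> > 0" "ball s \<epsilon> \<subseteq> Y"
    using openE[OF assms(1,3)] by blast
  define k0 where "k0 = (\<lambda>z. s + of_real \<epsilon> * z)"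
  have k0: "k0 \<in> hurwitz_family (ball 0 1) Y 0 s"
    unfolding k0_def using hurwitz_family_affine[OF \<open>\<epsilon> > 0\<close> \<open>ball s \<epsilon> \<subseteq> Y\<close>] .
  then show "hurwitz_family (ball 0 1) Y 0 s \<noteq> {}"
    by blast
  have "deriv k0 0 = of_real \<epsilon>"
    unfolding k0_def by (intro DERIV_imp_deriv) (auto intro!: derivative_eq_intros)
  note bdd = bdd_above_hurwitz_derivs[OF assms(2)]
  show rY: "hurwitz_radius Y s = (SUP k\<in>hurwitz_family (ball 0 1) Y 0 s. cmod (deriv k 0))"
    using hurwitz_radius_eq_SUP[OF bdd k0] \<open>deriv k0 0 = of_real \<epsilon>\<close> \<open>\<epsilon> > 0\<close> by simp
  show "0 < hurwitz_radius Y s"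
    using cSUP_upper[OF k0 bdd] \<open>deriv k0 0 = of_real \<epsilon>\<close> \<open>\<epsilon> > 0\<close> rY by simp
qed

locale centred_Riemann_map =
  fixes \<Omega> :: "complex set" and w :: complex and F G :: "complex \<Rightarrow> complex"
  assumes open_domain: "open \<Omega>" and centre: "w \<in> \<Omega>" and F_centre: "F w = 0"
    and F_holo: "F holomorphic_on \<Omega>" and G_holo: "G holomorphic_on ball 0 1"
    and F_in_disc: "\<And>z. z \<in> \<Omega> \<Longrightarrow> F z \<in> ball 0 1" and G_F: "\<And>z. z \<in> \<Omega> \<Longrightarrow> G (F z) = z"
    and G_in_domain: "\<And>z. z \<in> ball 0 1 \<Longrightarrow> G z \<in> \<Omega>" and F_G: "\<And>z. z \<in> ball 0 1 \<Longrightarrow> F (G z) = z"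
begin

lemma G_0: "G 0 = w"
  using G_F[OF centre] F_centre by simp

lemma F_eq_0_imp: "z \<in> \<Omega> \<Longrightarrow> F z = 0 \<Longrightarrow> z = w"
  using G_F G_0 by force

lemma F_differentiable: "z \<in> \<Omega> \<Longrightarrow> F field_differentiable at z"
  using F_holo open_domain by (rule holomorphic_on_imp_differentiable_at)

lemma deriv_compose_F:
  assumes "k holomorphic_on ball 0 1"
  shows "deriv (k \<circ> F) w = deriv k 0 * deriv F w"
  using deriv_chain[OF F_differentiable[OF centre]] F_centre
    holomorphic_on_imp_differentiable_at[OF assms open_ball, of 0]
  by simp

lemma deriv_F_times_deriv_G: "deriv F w * deriv G 0 = 1"
proof -
  have "deriv (F \<circ> G) 0 = deriv (\<lambda>z. z) 0"
    using eventually_nhds_in_open[of "ball 0 1" 0] F_G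
    by (intro deriv_cong_ev) (auto elim!: eventually_mono)
  moreover have "G field_differentiable at 0"
    using G_holo by (auto intro: holomorphic_on_imp_differentiable_at)
  then have "deriv (F \<circ> G) 0 = deriv F w * deriv G 0"
    using deriv_chain F_differentiable[OF centre] G_0 by metis
  ultimately show ?thesis
    by simp
qed

lemma compose_F_in_hurwitz_family:
  "k \<in> hurwitz_family (ball 0 1) Y 0 s \<Longrightarrow> k \<circ> F \<in> hurwitz_family \<Omega> Y w s"
  by (rule hurwitz_family_compose)
     (use F_holo F_in_disc F_centre F_eq_0_imp in \<open>auto simp: image_subset_iff\<close>)

lemma compose_G_in_hurwitz_family:
  "h \<in> hurwitz_family \<Omega> Y w s \<Longrightarrow> h \<circ> G \<in> hurwitz_family (ball 0 1) Y 0 s"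
proof (rule hurwitz_family_compose)
  show "z = 0" if "z \<in> ball 0 1" "G z = w" for z
    using F_G[OF that(1)] that(2) F_centre by simp
qed (use G_holo G_in_domain G_0 in auto)

lemma deriv_hurwitz_family_transfer:
  "(\<lambda>h. cmod (deriv h w)) ` hurwitz_family \<Omega> Y w s
     = (\<lambda>k. cmod (deriv k 0) * cmod (deriv F w)) ` hurwitz_family (ball 0 1) Y 0 s"
proof (intro equalityI subsetI)
  fix y assume "y \<in> (\<lambda>h. cmod (deriv h w)) ` hurwitz_family \<Omega> Y w s"
  then obtain h where h: "h \<in> hurwitz_family \<Omega> Y w s" and y: "y = cmod (deriv h w)" by blast
  have "deriv h w = deriv ((h \<circ> G) \<circ> F) w"
    using eventually_nhds_in_open[OF open_domain centre] G_F
    by (intro deriv_cong_ev) (auto elim!: eventually_mono)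
  also have "\<dots> = deriv (h \<circ> G) 0 * deriv F w"
    using compose_G_in_hurwitz_family[OF h]
    by (intro deriv_compose_F) (simp add: hurwitz_family_def)
  finally show "y \<in> (\<lambda>k. cmod (deriv k 0) * cmod (deriv F w)) ` hurwitz_family (ball 0 1) Y 0 s"
    using compose_G_in_hurwitz_family[OF h] y by (force simp: norm_mult)
next
  fix y assume "y \<in> (\<lambda>k. cmod (deriv k 0) * cmod (deriv F w)) ` hurwitz_family (ball 0 1) Y 0 s"
  then obtain k where k: "k \<in> hurwitz_family (ball 0 1) Y 0 s"
    and y: "y = cmod (deriv k 0) * cmod (deriv F w)" by blast
  have "deriv (k \<circ> F) w = deriv k 0 * deriv F w"
    using k by (intro deriv_compose_F) (simp add: hurwitz_family_def)
  then show "y \<in> (\<lambda>h. cmod (deriv h w)) ` hurwitz_family \<Omega> Y w s"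
    using compose_F_in_hurwitz_family[OF k] y by (force simp: norm_mult)
qed

lemma hurwitz_family_deriv_le:
  assumes k: "k \<in> hurwitz_family (ball 0 1) \<Omega> 0 w"
  shows "cmod (deriv k 0) \<le> cmod (deriv G 0)"
proof -
  have holk: "k holomorphic_on ball 0 1" and k_in: "k ` ball 0 1 \<subseteq> \<Omega>" and "k 0 = w"
    using k by (auto simp: hurwitz_family_def)
  have "cmod (deriv (F \<circ> k) 0) \<le> 1"
  proof (rule Schwarz_Lemma(2)[where \<xi> = 0])
    show "F \<circ> k holomorphic_on ball 0 1"
      by (rule holomorphic_on_compose_gen[OF holk F_holo k_in])
    show "cmod ((F \<circ> k) z) < 1" if "cmod z < 1" for z
      using F_in_disc[of "k z"] k_in that by (auto simp: image_subset_iff)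
  qed (use \<open>k 0 = w\<close> F_centre in auto)
  moreover have "deriv (F \<circ> k) 0 = deriv F w * deriv k 0"
    using deriv_chain[OF holomorphic_on_imp_differentiable_at[OF holk open_ball]]
      F_differentiable[OF centre] \<open>k 0 = w\<close>
    by simp
  ultimately have "cmod (deriv F w) * cmod (deriv k 0) \<le> cmod (deriv F w) * cmod (deriv G 0)"
    using arg_cong[OF deriv_F_times_deriv_G, of cmod] by (simp add: norm_mult)
  moreover have "deriv F w \<noteq> 0"
    using deriv_F_times_deriv_G by auto
  ultimately show ?thesis
    by simp
qed

lemma hurwitz_density_domain: "hurwitz_density \<Omega> w = 2 * cmod (deriv F w)"
proof -
  let ?N = "(\<lambda>k. cmod (deriv k 0)) ` hurwitz_family (ball 0 1) \<Omega> 0 w"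
  have "G z \<noteq> w" if "z \<in> ball 0 1 - {0}" for z
    using F_G[of z] F_centre that by auto
  then have G: "G \<in> hurwitz_family (ball 0 1) \<Omega> 0 w"
    using G_holo G_in_domain G_0 by (auto simp: hurwitz_family_def)
  have "deriv G 0 \<noteq> 0"
    using deriv_F_times_deriv_G by auto
  have "Sup ?N = cmod (deriv G 0)"
    using G hurwitz_family_deriv_le by (intro cSup_eq_maximum) auto
  moreover have "bdd_above ?N"
    using hurwitz_family_deriv_le by (intro bdd_aboveI2)
  ultimately have "hurwitz_radius \<Omega> w = cmod (deriv G 0)"
    using hurwitz_radius_eq_SUP[OF _ G \<open>deriv G 0 \<noteq> 0\<close>] by simp
  then show ?thesis
    using arg_cong[OF deriv_F_times_deriv_G, of cmod] \<open>deriv G 0 \<noteq> 0\<close>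
    by (simp add: hurwitz_density_def norm_mult field_simps)
qed

end

lemma centred_Riemann_map_exists:
  assumes "open \<Omega>" "simply_connected \<Omega>" "\<Omega> \<noteq> UNIV" "w \<in> \<Omega>"
  obtains F G where "centred_Riemann_map \<Omega> w F G"
proof -
  obtain F0 G0 where F0: "F0 holomorphic_on \<Omega>" and G0: "G0 holomorphic_on ball 0 1"
    and F0G0: "\<forall>z\<in>\<Omega>. F0 z \<in> ball 0 1 \<and> G0 (F0 z) = z"
    and G0F0: "\<forall>z\<in>ball 0 1. G0 z \<in> \<Omega> \<and> F0 (G0 z) = z"
    using Riemann_mapping_theorem[of \<Omega>] assms by blast
  obtain f g where "f (F0 w) = 0"
    and f: "f holomorphic_on ball 0 1" "f ` ball 0 1 \<subseteq> ball 0 1"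
    and g: "g holomorphic_on ball 0 1" "g ` ball 0 1 \<subseteq> ball 0 1"
    and "\<And>z. z \<in> ball 0 1 \<Longrightarrow> f (g z) = z" "\<And>z. z \<in> ball 0 1 \<Longrightarrow> g (f z) = z"
    using ball_biholomorphism_exists[of "F0 w"] F0G0 assms(4) by blast
  moreover have "f \<circ> F0 holomorphic_on \<Omega>"
    using F0G0 by (intro holomorphic_on_compose_gen[OF F0 f(1)]) auto
  moreover have "G0 \<circ> g holomorphic_on ball 0 1"
    by (rule holomorphic_on_compose_gen[OF g(1) G0 g(2)])
  ultimately have "centred_Riemann_map \<Omega> w (f \<circ> F0) (G0 \<circ> g)"
    using assms(1,4) F0G0 G0F0 unfolding centred_Riemann_map_def by (simp add: image_subset_iff)
  then show ?thesis
    using that by blast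
qed

theorem corollary3p10:
  fixes \<Omega> Y :: "complex set" and s w :: complex
  assumes "open \<Omega>" "connected \<Omega>" "simply_connected \<Omega>" "\<Omega> \<noteq> UNIV"
    and "open Y" "connected Y" "Y \<noteq> UNIV"
    and "s \<in> Y" "w \<in> \<Omega>"
  shows "caratheodory_hurwitz \<Omega> Y s w = hurwitz_density \<Omega> w"
proof -
  obtain F G where "centred_Riemann_map \<Omega> w F G"
    using centred_Riemann_map_exists assms(1,3,4,9) by blast
  then interpret centred_Riemann_map \<Omega> w F G .
  let ?D = "hurwitz_family (ball 0 1) Y 0 s" and ?H = "hurwitz_family \<Omega> Y w s"
  note r_Y = hurwitz_radius_proper_domain[OF assms(5,7,8)]
  have "?H \<noteq> {}"
    using compose_F_in_hurwitz_family r_Y(1) by blast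
  then have "caratheodory_hurwitz \<Omega> Y s w = (SUP h\<in>?H. hurwitz_density Y (h w) * cmod (deriv h w))"
    by (simp add: caratheodory_hurwitz_def)
  also have "\<dots> = (SUP h\<in>?H. 2 / hurwitz_radius Y s * cmod (deriv h w))"
    by (rule SUP_cong) (simp_all add: hurwitz_family_def hurwitz_density_def)
  also have "\<dots> = (SUP k\<in>?D. 2 / hurwitz_radius Y s * cmod (deriv F w) * cmod (deriv k 0))"
    using arg_cong[OF deriv_hurwitz_family_transfer, of "(`) (\<lambda>x. 2 / hurwitz_radius Y s * x)"]
    by (simp add: image_comp o_def mult_ac)
  also have "\<dots> = 2 * cmod (deriv F w)"
    using r_Y bdd_above_hurwitz_derivs[OF assms(7)] by (subst cSUP_mult_left_nonneg) auto
  also have "\<dots> = hurwitz_density \<Omega> w"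
    by (rule hurwitz_density_domain[symmetric])
  finally show ?thesis .
qed

end
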